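(* Let $A,B\in\mathbb{B}(\mathscr{H})$ be positive invertible operators and let $0\le v\le 1$. Let $g:[0,1]\to\mathbb{R}$ be non-decreasing on $[0,1]$ with $g(1)\ne g(0)$. Then \[ A\sharp_v B+\frac{4}{g(1)-g(0)}\int_{0}^{1}\left(F_{t,v}(A,B)-F_{1/2,v}(A,B)\right)g(t)\,dt\le A\nabla_v B . \]
   Context: $\mathbb{B}(\mathscr{H})$ is the algebra of bounded operators on a complex Hilbert space $\mathscr{H}$; $\le$ is the Loewner order ($X\le Y$ iff $\langle Xx,x\rangle\le\langle Yx,x\rangle$ for all $x$). For positive invertible $A,B$ and $0\le v\le1$: $A\nabla_v B=(1-v)A+vB$ and $A\sharp_v B=A^{1/2}\left(A^{-1/2}BA^{-1/2}\right)^{v}A^{1/2}$. The operator Heron mean is $F_{t,v}(A,B)=(1-t)(A\sharp_v B)+t(A\nabla_v B)$ for $0\le t\le1$; the integral is the operator-valued integral. *)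

theory Defs
  imports "HOL-Analysis.Analysis" "HOL-Library.Complex_Order"
begin

text \<open>A complex Hilbert space is modelled as a real Hilbert space H (type class
  real_inner + complete_space) together with a complex structure J (multiplication
  by the imaginary unit): J is a real-linear isometry with J o J = -id.\<close>

definition complex_structure :: "('a::{real_inner,complete_space} \<Rightarrow>\<^sub>L 'a) \<Rightarrow> bool" where
  "complex_structure J \<longleftrightarrow> J o\<^sub>L J = - id_blinfun \<and> (\<forall>x. norm (J x) = norm x)"

text \<open>Complex inner product (linear in the first argument):
  <x,y> = Re <x,y> + i Re <x, i y>.\<close>
definition cinner :: "('a::{real_inner,complete_space} \<Rightarrow>\<^sub>L 'a) \<Rightarrow> 'a \<Rightarrow> 'a \<Rightarrow> complex" where
  "cinner J x y = Complex (x \<bullet> y) (x \<bullet> J y)"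

text \<open>Elements of B(H): bounded real-linear maps that are complex-linear, i.e. commute with J.\<close>
definition is_bop :: "('a::{real_inner,complete_space} \<Rightarrow>\<^sub>L 'a) \<Rightarrow> ('a \<Rightarrow>\<^sub>L 'a) \<Rightarrow> bool" where
  "is_bop J X \<longleftrightarrow> X o\<^sub>L J = J o\<^sub>L X"

definition loewner_le :: "('a::{real_inner,complete_space} \<Rightarrow>\<^sub>L 'a) \<Rightarrow> ('a \<Rightarrow>\<^sub>L 'a) \<Rightarrow> ('a \<Rightarrow>\<^sub>L 'a) \<Rightarrow> bool" where
  "loewner_le J X Y \<longleftrightarrow> (\<forall>x. cinner J (X x) x \<le> cinner J (Y x) x)"

definition bop_invertible :: "('a::real_normed_vector \<Rightarrow>\<^sub>L 'a) \<Rightarrow> bool" where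
  "bop_invertible X \<longleftrightarrow> (\<exists>Y. Y o\<^sub>L X = id_blinfun \<and> X o\<^sub>L Y = id_blinfun)"

definition bop_inverse :: "('a::real_normed_vector \<Rightarrow>\<^sub>L 'a) \<Rightarrow> ('a \<Rightarrow>\<^sub>L 'a)" where
  "bop_inverse X = (THE Y. Y o\<^sub>L X = id_blinfun \<and> X o\<^sub>L Y = id_blinfun)"

definition pos_invertible :: "('a::{real_inner,complete_space} \<Rightarrow>\<^sub>L 'a) \<Rightarrow> ('a \<Rightarrow>\<^sub>L 'a) \<Rightarrow> bool" where
  "pos_invertible J X \<longleftrightarrow> is_bop J X \<and> loewner_le J 0 X \<and> bop_invertible X"

definition bop_pow :: "('a::real_normed_vector \<Rightarrow>\<^sub>L 'a) \<Rightarrow> nat \<Rightarrow> ('a \<Rightarrow>\<^sub>L 'a)" where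
  "bop_pow T k = ((\<lambda>Y. Y o\<^sub>L T) ^^ k) id_blinfun"

text \<open>Functional calculus for the power function t \<mapsto> t^v (0 \<le> v \<le> 1) on a positive
  invertible operator C: with c = norm C, the spectrum of C lies in [m, c] with m > 0,
  so norm (I - C/c) < 1 and C^v = c^v (I - (I - C/c))^v is given by the norm-convergent
  binomial series.\<close>
definition opow :: "('a::{real_inner,complete_space} \<Rightarrow>\<^sub>L 'a) \<Rightarrow> real \<Rightarrow> ('a \<Rightarrow>\<^sub>L 'a)" where
  "opow C v = (norm C powr v) *\<^sub>R
     (\<Sum>k. ((v gchoose k) * (-1) ^ k) *\<^sub>R bop_pow (id_blinfun - (1 / norm C) *\<^sub>R C) k)"

definition wmean_arith :: "real \<Rightarrow> ('a::real_normed_vector \<Rightarrow>\<^sub>L 'a) \<Rightarrow> ('a \<Rightarrow>\<^sub>L 'a) \<Rightarrow> ('a \<Rightarrow>\<^sub>L 'a)" where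
  "wmean_arith v A B = (1 - v) *\<^sub>R A + v *\<^sub>R B"

definition wmean_geom :: "real \<Rightarrow> ('a::{real_inner,complete_space} \<Rightarrow>\<^sub>L 'a) \<Rightarrow> ('a \<Rightarrow>\<^sub>L 'a) \<Rightarrow> ('a \<Rightarrow>\<^sub>L 'a)" where
  "wmean_geom v A B =
     (let Ah = opow A (1/2); Aih = bop_inverse Ah
      in Ah o\<^sub>L opow (Aih o\<^sub>L B o\<^sub>L Aih) v o\<^sub>L Ah)"

definition heron :: "real \<Rightarrow> real \<Rightarrow> ('a::{real_inner,complete_space} \<Rightarrow>\<^sub>L 'a) \<Rightarrow> ('a \<Rightarrow>\<^sub>L 'a) \<Rightarrow> ('a \<Rightarrow>\<^sub>L 'a)" where
  "heron t v A B = (1 - t) *\<^sub>R wmean_geom v A B + t *\<^sub>R wmean_arith v A B"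

end

theory Submission
  imports Defs "HOL-Computational_Algebra.Formal_Power_Series"
begin

text \<open>
  Since \<open>F t v A B - F (1/2) v A B = (t - 1/2) (A \<nabla>\<^sub>v B - A \<sharp>\<^sub>v B)\<close>, the left-hand side
  is \<open>A \<sharp>\<^sub>v B + K (A \<nabla>\<^sub>v B - A \<sharp>\<^sub>v B)\<close> with \<open>K = 4 / (g 1 - g 0) * \<integral>\<^sub>0\<^sup>1 g t (t - 1/2) dt\<close>,
  and monotonicity of \<open>g\<close> gives \<open>K \<le> 2/3\<close>. So it suffices to prove the weighted operator
  AM-GM inequality \<open>A \<sharp>\<^sub>v B \<le> A \<nabla>\<^sub>v B\<close>.

  With \<open>S = A^(1/2)\<close> and \<open>C = S\<^sup>-\<^sup>1 B S\<^sup>-\<^sup>1\<close> we have \<open>A \<sharp>\<^sub>v B = S C^v S\<close>, which reduces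
  AM-GM to \<open>\<langle>C^v y, y\<rangle> \<le> (1 - v) \<langle>y, y\<rangle> + v \<langle>C y, y\<rangle>\<close>. Here \<open>C^v\<close> is the binomial series
  \<open>\<parallel>C\<parallel>^v \<Sum>\<^sub>k (v choose k) (-X)^k\<close> of \<open>X = 1 - C / \<parallel>C\<parallel>\<close>: its coefficients after the first are
  non-positive and the moments \<open>\<langle>X^k y, y\<rangle>\<close> are log-convex, so they dominate a geometric sequence
  and \<open>\<langle>C^v y, y\<rangle>\<close> is at most \<open>\<parallel>C\<parallel>^v (1 - \<rho>)^v \<langle>y, y\<rangle>\<close> with \<open>\<rho> = \<langle>X y, y\<rangle> / \<langle>y, y\<rangle>\<close>;
  Young's inequality finishes. The complex Hilbert space enters only through \<open>J\<close>: all operators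
  involved are self-adjoint and commute with \<open>J\<close>, so their complex quadratic forms are real.
\<close>

section \<open>Self-adjoint and coercive operators on a real Hilbert space\<close>

definition selfadjoint :: "('a::real_inner \<Rightarrow>\<^sub>L 'a) \<Rightarrow> bool" where
  "selfadjoint T \<longleftrightarrow> (\<forall>x y. T x \<bullet> y = x \<bullet> T y)"

definition positive_op :: "('a::real_inner \<Rightarrow>\<^sub>L 'a) \<Rightarrow> bool" where
  "positive_op T \<longleftrightarrow> (\<forall>x. 0 \<le> T x \<bullet> x)"

definition coercive :: "('a::real_inner \<Rightarrow>\<^sub>L 'a) \<Rightarrow> bool" where
  "coercive T \<longleftrightarrow> (\<exists>m>0. \<forall>x. m * (x \<bullet> x) \<le> T x \<bullet> x)"

lemma blinfun_compose_assoc: "(f o\<^sub>L g) o\<^sub>L h = f o\<^sub>L (g o\<^sub>L h)"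
  by (rule blinfun_eqI) simp

lemma blinfun_compose_id [simp]: "f o\<^sub>L id_blinfun = f" "id_blinfun o\<^sub>L f = f"
  by (rule blinfun_eqI; simp)+

lemma inner_blinfun_le_norm:
  fixes T :: "'a::real_inner \<Rightarrow>\<^sub>L 'a"
  shows "T x \<bullet> x \<le> norm T * (x \<bullet> x)"
proof -
  have "T x \<bullet> x \<le> norm (T x) * norm x" by (rule norm_cauchy_schwarz)
  also have "\<dots> \<le> norm T * norm x * norm x" by (intro mult_right_mono norm_blinfun) simp
  finally show ?thesis by (simp add: power2_norm_eq_inner[symmetric] power2_eq_square mult_ac)
qed

lemma selfadjoint_sandwich: "selfadjoint R \<Longrightarrow> selfadjoint B \<Longrightarrow> selfadjoint (R o\<^sub>L B o\<^sub>L R)"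
  by (simp add: selfadjoint_def)

lemma quadratic_nonneg_imp_discriminant_le:
  fixes a b c :: real
  assumes "\<And>t. 0 \<le> a + 2 * b * t + c * t^2" "0 \<le> c"
  shows "b^2 \<le> a * c"
proof (cases "c = 0")
  case True
  show ?thesis
  proof (cases "b = 0")
    case False
    have "0 \<le> a + 2 * b * (-(a+1)/(2*b)) + c * (-(a+1)/(2*b))^2" by (rule assms(1))
    with False True show ?thesis by (simp add: field_simps)
  qed (use True in simp)
next
  case False
  then have c: "c > 0" using assms(2) by simp
  have "0 \<le> a + 2 * b * (-b/c) + c * (-b/c)^2" by (rule assms(1))
  also have "\<dots> = a - b^2/c" using c by (simp add: field_simps power2_eq_square)
  finally show ?thesis using c by (simp add: field_simps mult.commute)
qed

lemma positive_op_Cauchy_Schwarz: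
  assumes "selfadjoint T" "positive_op T"
  shows "(T x \<bullet> y)^2 \<le> (T x \<bullet> x) * (T y \<bullet> y)"
proof (rule quadratic_nonneg_imp_discriminant_le)
  fix t :: real
  have "0 \<le> T (x + t *\<^sub>R y) \<bullet> (x + t *\<^sub>R y)" using assms(2) by (simp add: positive_op_def)
  also have "\<dots> = (T x \<bullet> x) + (T x \<bullet> y) * t + (T y \<bullet> x) * t + (T y \<bullet> y) * t^2"
    by (simp add: blinfun.bilinear_simps inner_add_left inner_add_right power2_eq_square algebra_simps)
  also have "T y \<bullet> x = T x \<bullet> y" using assms(1) by (simp add: selfadjoint_def inner_commute)
  finally show "0 \<le> (T x \<bullet> x) + 2 * (T x \<bullet> y) * t + (T y \<bullet> y) * t^2" by (simp add: algebra_simps)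
qed (use assms(2) in \<open>simp add: positive_op_def\<close>)

lemma positive_op_norm_apply_le:
  assumes "selfadjoint T" "positive_op T"
  shows "T x \<bullet> T x \<le> (T x \<bullet> x) * norm T"
proof (cases "T x = 0")
  case False
  have tx: "0 \<le> T x \<bullet> x" using assms(2) by (simp add: positive_op_def)
  have "(T x \<bullet> T x)^2 \<le> (T x \<bullet> x) * (T (T x) \<bullet> T x)"
    by (rule positive_op_Cauchy_Schwarz[OF assms])
  also have "\<dots> \<le> (T x \<bullet> x) * (norm T * (T x \<bullet> T x))"
    using tx by (intro mult_left_mono inner_blinfun_le_norm)
  finally have "(T x \<bullet> T x) * (T x \<bullet> T x) \<le> ((T x \<bullet> x) * norm T) * (T x \<bullet> T x)"
    by (simp add: power2_eq_square mult_ac)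
  moreover have "T x \<bullet> T x > 0" using False by simp
  ultimately show ?thesis by simp
qed (use assms(2) in \<open>simp add: positive_op_def\<close>)

lemma norm_le_if_quadratic_form_le:
  assumes T: "selfadjoint T" "positive_op T" and r: "0 \<le> r" and le: "\<And>x. T x \<bullet> x \<le> r * (x \<bullet> x)"
  shows "norm T \<le> r"
proof (rule norm_blinfun_bound[OF r])
  fix x
  show "norm (T x) \<le> r * norm x"
  proof (cases "T x = 0")
    case False
    have "(T x \<bullet> T x)^2 \<le> (T x \<bullet> x) * (T (T x) \<bullet> T x)"
      by (rule positive_op_Cauchy_Schwarz[OF T])
    also have "\<dots> \<le> (r * (x \<bullet> x)) * (r * (T x \<bullet> T x))"
      using T(2) r by (intro mult_mono le) (auto simp: positive_op_def)
    finally have "(T x \<bullet> T x) * (T x \<bullet> T x) \<le> (r^2 * (x \<bullet> x)) * (T x \<bullet> T x)"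
      by (simp add: power2_eq_square algebra_simps)
    then have "T x \<bullet> T x \<le> r^2 * (x \<bullet> x)"
      using False by simp
    then have "norm (T x)^2 \<le> (r * norm x)^2"
      by (simp add: power2_norm_eq_inner power_mult_distrib)
    then show ?thesis by (rule power2_le_imp_le) (simp add: r)
  qed (simp add: r)
qed

lemma coercive_if_invertible:
  assumes "selfadjoint T" "positive_op T" "bop_invertible T"
  shows "coercive T"
proof -
  obtain Ti where Ti: "Ti o\<^sub>L T = id_blinfun" using assms(3) by (auto simp: bop_invertible_def)
  define M where "M = norm Ti ^ 2 * norm T + 1"
  have M: "M > 0" by (simp add: M_def add_nonneg_pos)
  have "x \<bullet> x \<le> M * (T x \<bullet> x)" for x
  proof -
    have tx: "0 \<le> T x \<bullet> x" using assms(2) by (simp add: positive_op_def)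
    have "norm x = norm (Ti (T x))" using Ti by (metis blinfun_apply_blinfun_compose blinfun_apply_id_blinfun)
    also have "\<dots> \<le> norm Ti * norm (T x)" by (rule norm_blinfun)
    finally have "norm x ^ 2 \<le> (norm Ti * norm (T x))^2" by (simp add: power_mono)
    then have "x \<bullet> x \<le> norm Ti ^ 2 * (T x \<bullet> T x)"
      by (simp add: power2_norm_eq_inner power_mult_distrib)
    also have "\<dots> \<le> norm Ti ^ 2 * ((T x \<bullet> x) * norm T)"
      using positive_op_norm_apply_le[OF assms(1,2)] by (simp add: mult_left_mono)
    also have "\<dots> \<le> M * (T x \<bullet> x)" using tx by (simp add: M_def algebra_simps)
    finally show ?thesis .
  qed
  then show ?thesis using M unfolding coercive_def
    by (intro exI[of _ "1/M"]) (simp add: field_simps mult.commute)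
qed

lemma coercive_nonzero:
  fixes C :: "'a::real_inner \<Rightarrow>\<^sub>L 'a" and x :: 'a
  assumes "coercive C" "x \<noteq> 0"
  shows "C \<noteq> 0"
proof
  assume "C = 0"
  obtain m where "m > 0" "m * (x \<bullet> x) \<le> C x \<bullet> x" using assms(1) by (auto simp: coercive_def)
  moreover have "0 < m * (x \<bullet> x)" using \<open>m > 0\<close> assms(2) by simp
  ultimately show False using \<open>C = 0\<close> by simp
qed

section \<open>Complex structure and the Loewner order\<close>

lemma is_bop_iff: "is_bop J X \<longleftrightarrow> (\<forall>x. X (J x) = J (X x))"
  by (auto simp: is_bop_def intro: blinfun_eqI dest: arg_cong[where f = "\<lambda>T. blinfun_apply T _"])

lemma is_bop_compose: "is_bop J X \<Longrightarrow> is_bop J Y \<Longrightarrow> is_bop J (X o\<^sub>L Y)"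
  by (simp add: is_bop_iff)

lemma loewner_le_iff:
  "loewner_le J X Y \<longleftrightarrow> (\<forall>x. X x \<bullet> x \<le> Y x \<bullet> x \<and> X x \<bullet> J x = Y x \<bullet> J x)"
  by (simp add: loewner_le_def cinner_def less_eq_complex_def)

lemma loewner_le_trivial:
  fixes X Y :: "'a::{real_inner,complete_space} \<Rightarrow>\<^sub>L 'a"
  assumes "\<And>x::'a. x = 0"
  shows "loewner_le J X Y"
proof -
  have "X = Y" by (rule blinfun_eqI) (metis assms)
  then show ?thesis by (simp add: loewner_le_iff)
qed

lemma loewner_le_affine:
  assumes "loewner_le J G N" "K \<le> 1"
  shows "loewner_le J (G + K *\<^sub>R (N - G)) N"
  unfolding loewner_le_iff
proof (intro allI conjI)
  fix x
  have "0 \<le> (1 - K) * (N x \<bullet> x - G x \<bullet> x)" using assms by (simp add: loewner_le_iff)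
  then show "(G + K *\<^sub>R (N - G)) x \<bullet> x \<le> N x \<bullet> x"
    by (simp add: blinfun.bilinear_simps inner_add_left inner_diff_left algebra_simps)
  show "(G + K *\<^sub>R (N - G)) x \<bullet> J x = N x \<bullet> J x"
    using assms by (simp add: loewner_le_iff blinfun.bilinear_simps inner_add_left inner_diff_left)
qed

context
  fixes J :: "'a::{real_inner,complete_space} \<Rightarrow>\<^sub>L 'a"
  assumes J: "complex_structure J"
begin

lemma complex_structure_twice: "J (J x) = - x"
proof -
  have "(J o\<^sub>L J) x = (- id_blinfun) x" using J by (simp add: complex_structure_def)
  then show ?thesis by (simp add: blinfun.bilinear_simps)
qed

lemma inner_complex_structure: "J x \<bullet> J y = x \<bullet> y"
proof -
  have n: "J z \<bullet> J z = z \<bullet> z" for z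
    using J by (simp add: complex_structure_def flip: power2_norm_eq_inner)
  have "J (x + y) \<bullet> J (x + y) = (x + y) \<bullet> (x + y)" by (rule n)
  then show ?thesis
    by (simp add: blinfun.bilinear_simps inner_add_left inner_add_right inner_commute n)
qed

lemma inner_complex_structure_right: "x \<bullet> J y = - (J x \<bullet> y)"
  using inner_complex_structure[of x "J y"] by (simp add: complex_structure_twice)

text \<open>\<open>T x \<bullet> J x\<close> is the imaginary part of the complex form \<open>cinner J (T x) x\<close>.\<close>
lemma selfadjoint_inner_complex_structure:
  assumes "selfadjoint T" "is_bop J T"
  shows "T x \<bullet> J x = 0"
proof -
  have "T x \<bullet> J x = x \<bullet> J (T x)"
    using assms by (simp add: selfadjoint_def is_bop_iff flip: inner_commute)
  also have "\<dots> = - (T x \<bullet> J x)"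
    by (simp add: inner_complex_structure_right inner_commute)
  finally show ?thesis by simp
qed

lemma loewner_le_iff_inner_le:
  assumes "selfadjoint X" "is_bop J X" "selfadjoint Y" "is_bop J Y"
  shows "loewner_le J X Y \<longleftrightarrow> (\<forall>x. X x \<bullet> x \<le> Y x \<bullet> x)"
  using assms by (simp add: loewner_le_iff selfadjoint_inner_complex_structure)

lemma pos_invertible_selfadjoint:
  assumes "pos_invertible J A"
  shows "selfadjoint A"
  unfolding selfadjoint_def
proof (intro allI)
  fix x z
  have im: "A y \<bullet> J y = 0" for y
    using assms by (simp add: pos_invertible_def loewner_le_iff)
  have comm: "A (J y) = J (A y)" for y
    using assms by (simp add: pos_invertible_def is_bop_iff)
  have "0 = A (x + J z) \<bullet> J (x + J z)" by (rule im[symmetric])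
  also have "\<dots> = A x \<bullet> J (J z) + A (J z) \<bullet> J x"
    by (simp add: blinfun.bilinear_simps inner_add_left inner_add_right im)
  also have "\<dots> = x \<bullet> A z - z \<bullet> A x"
    by (simp add: complex_structure_twice comm inner_complex_structure inner_commute)
  finally show "A x \<bullet> z = x \<bullet> A z" by (simp add: inner_commute)
qed

lemma pos_invertible_coercive: "pos_invertible J A \<Longrightarrow> coercive A"
  by (intro coercive_if_invertible pos_invertible_selfadjoint)
    (auto simp: pos_invertible_def loewner_le_iff positive_op_def)

end

lemma bop_inverse:
  assumes "bop_invertible X"
  shows "bop_inverse X o\<^sub>L X = id_blinfun" "X o\<^sub>L bop_inverse X = id_blinfun"
proof -
  obtain Y where Y: "Y o\<^sub>L X = id_blinfun" "X o\<^sub>L Y = id_blinfun"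
    using assms by (auto simp: bop_invertible_def)
  have "bop_inverse X = Y"
    unfolding bop_inverse_def
  proof (rule the_equality)
    fix Z assume "Z o\<^sub>L X = id_blinfun \<and> X o\<^sub>L Z = id_blinfun"
    then show "Z = Y" by (metis Y(2) blinfun_compose_assoc blinfun_compose_id)
  qed (use Y in simp)
  with Y show "bop_inverse X o\<^sub>L X = id_blinfun" "X o\<^sub>L bop_inverse X = id_blinfun" by simp_all
qed

lemma bop_inverse_apply:
  assumes "bop_invertible X"
  shows "bop_inverse X (X x) = x" "X (bop_inverse X x) = x"
  using bop_inverse[OF assms] by (metis blinfun_apply_blinfun_compose blinfun_apply_id_blinfun)+

lemma bop_invertible_bop_inverse: "bop_invertible X \<Longrightarrow> bop_invertible (bop_inverse X)"
  using bop_inverse unfolding bop_invertible_def by blast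

lemma bop_invertible_if_square:
  assumes "S o\<^sub>L S = A" "bop_invertible A"
  shows "bop_invertible S"
proof -
  obtain Y where Y: "Y o\<^sub>L A = id_blinfun" "A o\<^sub>L Y = id_blinfun"
    using assms(2) by (auto simp: bop_invertible_def)
  have left: "(Y o\<^sub>L S) o\<^sub>L S = id_blinfun"
    using Y(1) assms(1) by (simp add: blinfun_compose_assoc)
  have right: "S o\<^sub>L (S o\<^sub>L Y) = id_blinfun"
    using Y(2) assms(1) by (simp flip: blinfun_compose_assoc)
  have "Y o\<^sub>L S = S o\<^sub>L Y"
    by (metis left right blinfun_compose_assoc blinfun_compose_id)
  with left right show ?thesis
    unfolding bop_invertible_def by (intro exI[of _ "S o\<^sub>L Y"]) simp
qed

lemma selfadjoint_bop_inverse: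
  assumes "selfadjoint S" "bop_invertible S"
  shows "selfadjoint (bop_inverse S)"
  unfolding selfadjoint_def
proof (intro allI)
  fix x y
  have "bop_inverse S x \<bullet> y = bop_inverse S x \<bullet> S (bop_inverse S y)"
    by (simp add: bop_inverse_apply assms(2))
  also have "\<dots> = S (bop_inverse S x) \<bullet> bop_inverse S y"
    using assms(1) by (simp add: selfadjoint_def)
  also have "\<dots> = x \<bullet> bop_inverse S y"
    by (simp add: bop_inverse_apply assms(2))
  finally show "bop_inverse S x \<bullet> y = x \<bullet> bop_inverse S y" .
qed

lemma is_bop_bop_inverse:
  assumes "is_bop J S" "bop_invertible S"
  shows "is_bop J (bop_inverse S)"
  unfolding is_bop_iff
proof
  fix x
  have "bop_inverse S (J x) = bop_inverse S (J (S (bop_inverse S x)))"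
    by (simp add: bop_inverse_apply assms(2))
  also have "\<dots> = bop_inverse S (S (J (bop_inverse S x)))"
    using assms(1) by (simp add: is_bop_iff)
  also have "\<dots> = J (bop_inverse S x)"
    by (simp add: bop_inverse_apply assms(2))
  finally show "bop_inverse S (J x) = J (bop_inverse S x)" .
qed

lemma coercive_sandwich:
  assumes "coercive B" "selfadjoint R" "bop_invertible R"
  shows "coercive (R o\<^sub>L B o\<^sub>L R)"
proof -
  obtain m where m: "m > 0" "\<And>x. m * (x \<bullet> x) \<le> B x \<bullet> x"
    using assms(1) by (auto simp: coercive_def)
  define c where "c = norm (bop_inverse R) ^ 2 + 1"
  have c: "c > 0" by (simp add: c_def add_nonneg_pos)
  have R_below: "x \<bullet> x \<le> c * (R x \<bullet> R x)" for x
  proof -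
    have "norm x \<le> norm (bop_inverse R) * norm (R x)"
      using norm_blinfun[of "bop_inverse R" "R x"] by (simp add: bop_inverse_apply assms(3))
    then have "norm x ^ 2 \<le> (norm (bop_inverse R) * norm (R x)) ^ 2" by (simp add: power_mono)
    then have "x \<bullet> x \<le> norm (bop_inverse R) ^ 2 * (R x \<bullet> R x)"
      by (simp add: power2_norm_eq_inner power_mult_distrib)
    also have "\<dots> \<le> c * (R x \<bullet> R x)" by (simp add: c_def mult_right_mono)
    finally show ?thesis .
  qed
  have "m / c * (x \<bullet> x) \<le> (R o\<^sub>L B o\<^sub>L R) x \<bullet> x" for x
  proof -
    have "m / c * (x \<bullet> x) \<le> m / c * (c * (R x \<bullet> R x))"
      using m c R_below by (intro mult_left_mono) auto
    also have "\<dots> = m * (R x \<bullet> R x)" using c by simp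
    also have "\<dots> \<le> B (R x) \<bullet> R x" by (rule m(2))
    also have "\<dots> = (R o\<^sub>L B o\<^sub>L R) x \<bullet> x" using assms(2) by (simp add: selfadjoint_def)
    finally show ?thesis .
  qed
  with m c show ?thesis unfolding coercive_def by (intro exI[of _ "m / c"]) simp
qed

section \<open>Powers and their moments\<close>

lemma bop_pow_0 [simp]: "bop_pow T 0 = id_blinfun"
  by (simp add: bop_pow_def)

lemma bop_pow_Suc: "bop_pow T (Suc k) = bop_pow T k o\<^sub>L T"
  by (simp add: bop_pow_def)

lemma bop_pow_Suc_left: "bop_pow T (Suc k) = T o\<^sub>L bop_pow T k"
  by (induction k) (simp_all add: bop_pow_Suc blinfun_compose_assoc)

lemma bop_pow_add: "bop_pow T (i + j) = bop_pow T i o\<^sub>L bop_pow T j"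
  by (induction j) (simp_all add: bop_pow_Suc blinfun_compose_assoc)

lemma norm_bop_pow_le: "norm (bop_pow T k) \<le> norm T ^ k"
proof (induction k)
  case 0 then show ?case by (simp add: norm_blinfun_id_le)
next
  case (Suc k)
  have "norm (bop_pow T (Suc k)) \<le> norm (bop_pow T k) * norm T"
    unfolding bop_pow_Suc by (rule norm_blinfun_compose)
  also have "\<dots> \<le> norm T ^ k * norm T" using Suc by (simp add: mult_right_mono)
  finally show ?case by (simp add: mult.commute)
qed

lemma is_bop_bop_pow: "is_bop J T \<Longrightarrow> is_bop J (bop_pow T k)"
  by (induction k) (simp_all add: bop_pow_Suc is_bop_compose, simp add: is_bop_iff)

lemma selfadjoint_bop_pow: "selfadjoint T \<Longrightarrow> selfadjoint (bop_pow T k)"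
proof (induction k)
  case (Suc k)
  have "bop_pow T k (T y) = T (bop_pow T k y)" for y
    by (metis bop_pow_Suc bop_pow_Suc_left blinfun_apply_blinfun_compose)
  with Suc show ?case by (simp add: selfadjoint_def bop_pow_Suc)
qed (simp add: selfadjoint_def)

lemma inner_bop_pow_add:
  assumes "selfadjoint T"
  shows "bop_pow T (i + j) x \<bullet> y = bop_pow T i x \<bullet> bop_pow T j y"
proof -
  have "bop_pow T (i + j) x \<bullet> y = bop_pow T j (bop_pow T i x) \<bullet> y"
    by (simp add: bop_pow_add add.commute[of i])
  also have "\<dots> = bop_pow T i x \<bullet> bop_pow T j y"
    using selfadjoint_bop_pow[OF assms, of j] by (simp add: selfadjoint_def)
  finally show ?thesis .
qed

lemma inner_bop_pow_nonneg:
  assumes "selfadjoint T" "positive_op T"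
  shows "0 \<le> bop_pow T k x \<bullet> x"
proof -
  have "\<exists>i. k = i + i \<or> k = Suc i + i" by presburger
  then obtain i where "k = i + i \<or> k = Suc i + i" by blast
  then show ?thesis
  proof
    assume "k = i + i"
    then have "bop_pow T k x \<bullet> x = bop_pow T i x \<bullet> bop_pow T i x"
      by (simp only: inner_bop_pow_add[OF assms(1)])
    then show ?thesis by simp
  next
    assume "k = Suc i + i"
    then have "bop_pow T k x \<bullet> x = T (bop_pow T i x) \<bullet> bop_pow T i x"
      by (simp only: inner_bop_pow_add[OF assms(1)] bop_pow_Suc_left blinfun_apply_blinfun_compose)
    then show ?thesis using assms(2) by (simp add: positive_op_def)
  qed
qed

lemma inner_bop_pow_log_convex:
  assumes "selfadjoint T" "positive_op T"
  shows "(bop_pow T (Suc n) x \<bullet> x)^2 \<le> (bop_pow T n x \<bullet> x) * (bop_pow T (Suc (Suc n)) x \<bullet> x)"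
proof -
  note split = inner_bop_pow_add[OF assms(1)]
  have "\<exists>i. n = i + i \<or> n = Suc i + i" by presburger
  then obtain i where "n = i + i \<or> n = Suc i + i" by blast
  then show ?thesis
  proof
    assume n: "n = i + i"
    let ?u = "bop_pow T i x" and ?w = "bop_pow T (Suc i) x"
    have "Suc n = i + Suc i" "Suc (Suc n) = Suc i + Suc i" using n by simp_all
    then have "bop_pow T (Suc n) x \<bullet> x = ?u \<bullet> ?w" "bop_pow T n x \<bullet> x = ?u \<bullet> ?u"
      "bop_pow T (Suc (Suc n)) x \<bullet> x = ?w \<bullet> ?w"
      by (simp_all only: n split)
    then show ?thesis by (simp only: Cauchy_Schwarz_ineq)
  next
    assume n: "n = Suc i + i"
    let ?u = "bop_pow T i x" and ?w = "bop_pow T (Suc i) x"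
    have "Suc n = Suc i + Suc i" "Suc (Suc n) = Suc (Suc i) + Suc i" using n by simp_all
    then have "bop_pow T (Suc n) x \<bullet> x = T ?u \<bullet> ?w" "bop_pow T n x \<bullet> x = T ?u \<bullet> ?u"
      "bop_pow T (Suc (Suc n)) x \<bullet> x = T ?w \<bullet> ?w"
      by (simp_all only: n split bop_pow_Suc_left blinfun_apply_blinfun_compose)
    then show ?thesis by (simp only: positive_op_Cauchy_Schwarz[OF assms])
  qed
qed

lemma log_convex_seq_ge_geometric:
  fixes m :: "nat \<Rightarrow> real"
  assumes nonneg: "\<And>n. 0 \<le> m n" and m0: "0 < m 0"
    and log_convex: "\<And>n. (m (Suc n))^2 \<le> m n * m (Suc (Suc n))"
  shows "(m 1 / m 0)^k * m 0 \<le> m k"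
proof -
  define \<rho> where "\<rho> = m 1 / m 0"
  have \<rho>: "0 \<le> \<rho>" using nonneg m0 by (simp add: \<rho>_def)
  have "\<rho> * m k \<le> m (Suc k) \<and> \<rho>^k * m 0 \<le> m k" for k
  proof (induction k)
    case 0 then show ?case using m0 by (simp add: \<rho>_def)
  next
    case (Suc k)
    then have ratio: "\<rho> * m k \<le> m (Suc k)" and geo: "\<rho>^k * m 0 \<le> m k" by auto
    have "\<rho> * m (Suc k) \<le> m (Suc (Suc k))"
    proof (cases "\<rho> = 0")
      case False
      then have mk: "m k > 0"
        using geo m0 \<rho> by (smt (verit) zero_less_power mult_pos_pos)
      have "m k * (\<rho> * m (Suc k)) \<le> m (Suc k) * m (Suc k)"
        using mult_right_mono[OF ratio nonneg[of "Suc k"]] by (simp add: mult_ac)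
      also have "\<dots> \<le> m k * m (Suc (Suc k))" using log_convex[of k] by (simp add: power2_eq_square)
      finally show ?thesis using mk by simp
    qed (simp add: nonneg)
    moreover have "\<rho>^(Suc k) * m 0 \<le> m (Suc k)"
      using mult_left_mono[OF geo \<rho>] ratio by (simp add: mult_ac)
    ultimately show ?case by simp
  qed
  then show ?thesis by (simp add: \<rho>_def)
qed

section \<open>Absolutely summable series of operators\<close>

text \<open>Reduction to the real case: the defect between the product of the partial sums and the
  partial sums of the Cauchy product is bounded by the same defect for the norms.\<close>
lemma (in bounded_bilinear) Cauchy_product_sums:
  assumes a: "summable (\<lambda>k. norm (a k))" and b: "summable (\<lambda>k. norm (b k))"
    and "summable a" "summable b"
  shows "(\<lambda>k. \<Sum>i\<le>k. prod (a i) (b (k - i))) sums prod (suminf a) (suminf b)"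
proof -
  obtain K where K: "\<And>x y. norm (prod x y) \<le> norm x * norm y * K"
    using bounded by blast
  define S1 where "S1 n = {..<n} \<times> {..<n}" for n :: nat
  define S2 where "S2 n = {(i, j). i + j < n}" for n :: nat
  have S2_S1: "S2 n \<subseteq> S1 n" and fin: "finite (S1 n)" for n
    by (auto simp: S1_def S2_def)
  define P where "P n = prod (\<Sum>i<n. a i) (\<Sum>j<n. b j)" for n
  define Q where "Q n = (\<Sum>k<n. \<Sum>i\<le>k. prod (a i) (b (k - i)))" for n
  define p where "p n = (\<Sum>i<n. norm (a i)) * (\<Sum>j<n. norm (b j))" for n
  define q where "q n = (\<Sum>k<n. \<Sum>i\<le>k. norm (a i) * norm (b (k - i)))" for n
  have PQ: "P n - Q n = (\<Sum>(i, j)\<in>S1 n - S2 n. prod (a i) (b j))" for n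
  proof -
    have "P n = (\<Sum>i<n. \<Sum>j<n. prod (a i) (b j))"
      unfolding P_def sum_left unfolding sum_right ..
    also have "\<dots> = (\<Sum>(i, j)\<in>S1 n. prod (a i) (b j))"
      by (simp add: S1_def sum.cartesian_product)
    finally have "P n = (\<Sum>(i, j)\<in>S1 n. prod (a i) (b j))" .
    moreover have "Q n = (\<Sum>(i, j)\<in>S2 n. prod (a i) (b j))"
      by (simp add: Q_def S2_def sum.triangle_reindex)
    ultimately show ?thesis by (simp add: sum_diff[OF fin S2_S1])
  qed
  have pq: "p n - q n = (\<Sum>(i, j)\<in>S1 n - S2 n. norm (a i) * norm (b j))" for n
  proof -
    have "p n = (\<Sum>(i, j)\<in>S1 n. norm (a i) * norm (b j))"
      by (simp add: p_def S1_def sum_product sum.cartesian_product)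
    moreover have "q n = (\<Sum>(i, j)\<in>S2 n. norm (a i) * norm (b j))"
      by (simp add: q_def S2_def sum.triangle_reindex)
    ultimately show ?thesis by (simp add: sum_diff[OF fin S2_S1])
  qed
  have bound: "norm (P n - Q n) \<le> norm (p n - q n) * K" for n
  proof -
    have "norm (P n - Q n) \<le> (\<Sum>(i, j)\<in>S1 n - S2 n. norm (a i) * norm (b j) * K)"
      unfolding PQ by (rule order_trans[OF norm_sum sum_mono]) (auto simp: K)
    also have "\<dots> = (p n - q n) * K"
      by (simp add: pq sum_distrib_right case_prod_unfold)
    also have "p n - q n = norm (p n - q n)"
      by (simp add: pq case_prod_unfold sum_nonneg)
    finally show ?thesis .
  qed
  have "(\<lambda>n. p n) \<longlonglongrightarrow> suminf (\<lambda>k. norm (a k)) * suminf (\<lambda>k. norm (b k))"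
    unfolding p_def using a b by (intro tendsto_mult summable_LIMSEQ)
  moreover have "(\<lambda>n. q n) \<longlonglongrightarrow> suminf (\<lambda>k. norm (a k)) * suminf (\<lambda>k. norm (b k))"
    using Cauchy_product_sums[of "\<lambda>k. norm (a k)" "\<lambda>k. norm (b k)"] a b
    by (simp add: q_def sums_def)
  ultimately have "(\<lambda>n. p n - q n) \<longlonglongrightarrow> 0"
    using tendsto_diff by force
  then have "(\<lambda>n. P n - Q n) \<longlonglongrightarrow> 0"
    by (rule tendsto_0_le[where K = K]) (intro always_eventually allI bound)
  moreover have "(\<lambda>n. P n) \<longlonglongrightarrow> prod (suminf a) (suminf b)"
    unfolding P_def using assms(3,4) by (intro tendsto summable_LIMSEQ)
  ultimately show ?thesis
    unfolding sums_def Q_def[symmetric] by (rule Lim_transform2[rotated])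
qed

text \<open>The type \<open>'a \<Rightarrow>\<^sub>L 'b\<close> is an instance of \<open>banach\<close> only for \<open>'b::banach\<close>, and
  \<open>{real_normed_vector, complete_space}\<close> is not a subsort of \<open>banach\<close>; hence the next two lemmas.\<close>
lemma summable_norm_cancel_complete:
  fixes f :: "nat \<Rightarrow> 'a::{real_normed_vector,complete_space}"
  assumes f: "summable (\<lambda>k. norm (f k))"
  shows "summable f"
proof (rule summable_bounded_partials[where g = "\<lambda>a. (\<Sum>k. norm (f k)) - (\<Sum>k\<le>a. norm (f k))"])
  show "(\<lambda>a. (\<Sum>k. norm (f k)) - (\<Sum>k\<le>a. norm (f k))) \<longlonglongrightarrow> 0"
    using tendsto_diff[OF tendsto_const summable_LIMSEQ'[OF f], of "\<Sum>k. norm (f k)"] by simp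
  have "norm (sum f {a<..b}) \<le> (\<Sum>k. norm (f k)) - (\<Sum>k\<le>a. norm (f k))" if "a < b" for a b
  proof -
    have split: "{a<..b} = {..b} - {..a}" by auto
    have "norm (sum f {a<..b}) \<le> (\<Sum>k\<in>{a<..b}. norm (f k))" by (rule norm_sum)
    also have "\<dots> = (\<Sum>k\<le>b. norm (f k)) - (\<Sum>k\<le>a. norm (f k))"
      unfolding split using that by (subst sum_diff) auto
    moreover have "(\<Sum>k\<le>b. norm (f k)) \<le> (\<Sum>k. norm (f k))"
      by (intro sum_le_suminf f) auto
    ultimately show ?thesis by linarith
  qed
  then show "\<forall>\<^sub>F x0 in sequentially. \<forall>a\<ge>x0. \<forall>b>a.
      norm (sum f {a<..b}) \<le> (\<Sum>k. norm (f k)) - (\<Sum>k\<le>a. norm (f k))"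
    by simp
qed

lemma summable_norm_cancel_blinfun:
  fixes f :: "nat \<Rightarrow> 'a::real_normed_vector \<Rightarrow>\<^sub>L 'b::{real_normed_vector,complete_space}"
  assumes f: "summable (\<lambda>k. norm (f k))"
  shows "summable f"
proof -
  have fx: "summable (\<lambda>k. norm (f (k + n)) * norm x)" for n x
    by (intro summable_mult2 summable_ignore_initial_segment f)
  have sx: "summable (\<lambda>k. f (k + n) x)" for n x
    by (rule summable_norm_cancel_complete, rule summable_comparison_test'[OF fx[of n x]])
      (simp add: norm_blinfun)
  have tail: "norm (\<Sum>k. f (k + n) x) \<le> (\<Sum>k. norm (f (k + n))) * norm x" for n x
  proof -
    have "norm (\<Sum>k. f (k + n) x) \<le> (\<Sum>k. norm (f (k + n)) * norm x)"
    proof (rule LIMSEQ_le_const2[OF tendsto_norm[OF summable_LIMSEQ[OF sx]]], intro exI allI impI)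
      fix m
      have "norm (\<Sum>k<m. f (k + n) x) \<le> (\<Sum>k<m. norm (f (k + n)) * norm x)"
        by (rule order_trans[OF norm_sum sum_mono]) (simp add: norm_blinfun)
      also have "\<dots> \<le> (\<Sum>k. norm (f (k + n)) * norm x)"
        by (intro sum_le_suminf fx) auto
      finally show "norm (\<Sum>k<m. f (k + n) x) \<le> (\<Sum>k. norm (f (k + n)) * norm x)" .
    qed
    also have "\<dots> = (\<Sum>k. norm (f (k + n))) * norm x"
      by (rule suminf_mult2[symmetric], rule summable_ignore_initial_segment[OF f])
    finally show ?thesis .
  qed
  define L where "L x = (\<Sum>k. f k x)" for x
  have L: "bounded_linear L"
  proof
    show "L (x + y) = L x + L y" "L (r *\<^sub>R x) = r *\<^sub>R L x" for x y r
      using sx[of 0] by (simp_all add: L_def blinfun.bilinear_simps suminf_add suminf_scaleR_right)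
    show "\<exists>K. \<forall>x. norm (L x) \<le> norm x * K"
    proof (intro exI allI)
      fix x
      show "norm (L x) \<le> norm x * (\<Sum>k. norm (f k))"
        using tail[of 0 x] by (simp add: L_def mult.commute)
    qed
  qed
  have "f sums Blinfun L"
    unfolding sums_def
  proof (rule LIM_zero_cancel, rule tendsto_0_le[where K = 1])
    have "(\<lambda>n. (\<Sum>k. norm (f k)) - (\<Sum>i<n. norm (f i))) \<longlonglongrightarrow> (\<Sum>k. norm (f k)) - (\<Sum>k. norm (f k))"
      by (intro tendsto_diff tendsto_const summable_LIMSEQ f)
    then show "(\<lambda>n. \<Sum>k. norm (f (k + n))) \<longlonglongrightarrow> 0"
      unfolding suminf_minus_initial_segment[OF f] by simp
    have "norm (sum f {..<n} - Blinfun L) \<le> norm (\<Sum>k. norm (f (k + n))) * 1" for n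
    proof (rule norm_blinfun_bound)
      fix x
      have "(sum f {..<n} - Blinfun L) x = - (\<Sum>k. f (k + n) x)"
        using L suminf_minus_initial_segment[OF sx[of 0 x], of n]
        by (simp add: bounded_linear_Blinfun_apply blinfun.bilinear_simps L_def)
      then show "norm ((sum f {..<n} - Blinfun L) x) \<le> norm (\<Sum>k. norm (f (k + n))) * 1 * norm x"
        using tail[of n x] suminf_nonneg[OF summable_ignore_initial_segment[OF f], of n] by simp
    qed simp
    then show "\<forall>\<^sub>F n in sequentially. norm (sum f {..<n} - Blinfun L) \<le> norm (\<Sum>k. norm (f (k + n))) * 1"
      by simp
  qed
  then show ?thesis by (rule sums_summable)
qed

section \<open>The binomial series of \<open>(1 - z) powr v\<close>\<close>

definition binom_coeff :: "real \<Rightarrow> nat \<Rightarrow> real" where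
  "binom_coeff v k = (v gchoose k) * (-1) ^ k"

lemma binom_coeff_0 [simp]: "binom_coeff v 0 = 1"
  by (simp add: binom_coeff_def)

lemma binom_coeff_Suc: "binom_coeff v (Suc k) = binom_coeff v k * ((of_nat k - v) / (of_nat k + 1))"
proof -
  have "(v gchoose Suc k) * fact (Suc k) = (v gchoose k) * fact k * (v - of_nat k)"
    by (simp only: gbinomial_mult_fact' prod.atLeast0_lessThan_Suc)
  then have "((v gchoose Suc k) * (of_nat k + 1)) * fact k = ((v gchoose k) * (v - of_nat k)) * fact k"
    by (simp only: fact_Suc of_nat_Suc) (simp add: algebra_simps)
  then have "(v gchoose Suc k) * (of_nat k + 1) = (v gchoose k) * (v - of_nat k)"
    by (metis fact_nonzero mult_right_cancel)
  then have rec: "(v gchoose Suc k) = (v gchoose k) * (v - of_nat k) / (of_nat k + 1)"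
    by (simp add: field_simps)
  show ?thesis
    unfolding binom_coeff_def rec power_Suc by (simp add: field_simps)
qed

lemma binom_coeff_nonpos: "0 \<le> v \<Longrightarrow> v \<le> 1 \<Longrightarrow> 1 \<le> k \<Longrightarrow> binom_coeff v k \<le> 0"
proof (induction k)
  case (Suc k)
  show ?case
  proof (cases "k = 0")
    case False
    then have "binom_coeff v k \<le> 0" using Suc by simp
    moreover have "0 \<le> (of_nat k - v) / (of_nat k + 1)"
      using False Suc.prems by (intro divide_nonneg_nonneg) (simp_all add: Suc_le_eq)
    ultimately show ?thesis unfolding binom_coeff_Suc by (rule mult_nonpos_nonneg)
  qed (use Suc.prems in \<open>simp add: binom_coeff_Suc\<close>)
qed simp

lemma binom_coeff_sums: "\<bar>z\<bar> < 1 \<Longrightarrow> (\<lambda>k. binom_coeff v k * z ^ k) sums ((1 - z) powr v)"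
  using gen_binomial_real[of "-z" v] by (simp add: binom_coeff_def power_minus' mult_ac)

lemma binom_coeff_abs_summable:
  assumes "0 \<le> v" "v \<le> 1" "0 \<le> r" "r < 1"
  shows "summable (\<lambda>k. \<bar>binom_coeff v k\<bar> * r ^ k)"
proof -
  have "summable (\<lambda>k. - (binom_coeff v k * r ^ k))"
    using binom_coeff_sums[of r v] assms by (intro summable_minus) (auto simp: sums_iff)
  then show ?thesis
  proof (rule summable_comparison_test'[where N = 1])
    fix n :: nat assume "1 \<le> n"
    then show "norm (\<bar>binom_coeff v n\<bar> * r ^ n) \<le> - (binom_coeff v n * r ^ n)"
      using binom_coeff_nonpos[OF assms(1,2), of n] assms by (simp add: abs_mult)
  qed
qed

lemma binom_coeff_half_convolution:
  "(\<Sum>i\<le>k. binom_coeff (1/2) i * binom_coeff (1/2) (k - i)) = binom_coeff 1 k"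
proof -
  have "(\<Sum>i\<le>k. binom_coeff (1/2) i * binom_coeff (1/2) (k - i))
      = (\<Sum>i=0..k. (1/2 gchoose i) * (1/2 gchoose (k - i))) * (-1)^k"
    unfolding sum_distrib_right atLeast0AtMost
    by (intro sum.cong) (auto simp: binom_coeff_def mult_ac simp flip: power_add)
  also have "\<dots> = binom_coeff 1 k"
    unfolding gbinomial_Vandermonde binom_coeff_def by simp
  finally show ?thesis .
qed

lemma binom_coeff_one: "binom_coeff 1 k = (if k = 0 then 1 else if k = 1 then -1 else 0)"
proof -
  have "(1::real) gchoose k = of_nat (1 choose k)"
    by (metis of_nat_1 binomial_gbinomial)
  then show ?thesis by (cases k; cases "k - 1") (auto simp: binom_coeff_def)
qed

section \<open>Operator binomial series\<close>

definition binom_series :: "real \<Rightarrow> ('a::real_normed_vector \<Rightarrow>\<^sub>L 'a) \<Rightarrow> ('a \<Rightarrow>\<^sub>L 'a)" where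
  "binom_series v X = (\<Sum>k. binom_coeff v k *\<^sub>R bop_pow X k)"

lemma binom_series_sums:
  fixes X :: "'a::{real_normed_vector,complete_space} \<Rightarrow>\<^sub>L 'a"
  assumes "0 \<le> v" "v \<le> 1" "norm X < 1"
  shows "(\<lambda>k. binom_coeff v k *\<^sub>R bop_pow X k) sums binom_series v X"
proof -
  have "summable (\<lambda>k. norm (binom_coeff v k *\<^sub>R bop_pow X k))"
  proof (rule summable_comparison_test'[OF binom_coeff_abs_summable[OF assms(1,2) norm_ge_zero assms(3)]])
    fix n
    show "norm (norm (binom_coeff v n *\<^sub>R bop_pow X n)) \<le> \<bar>binom_coeff v n\<bar> * norm X ^ n"
      using norm_bop_pow_le[of X n] by (simp add: mult_left_mono)
  qed
  then show ?thesis
    unfolding binom_series_def by (intro summable_sums summable_norm_cancel_blinfun)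
qed

context
  fixes v :: real and X :: "'a::{real_inner,complete_space} \<Rightarrow>\<^sub>L 'a"
  assumes v: "0 \<le> v" "v \<le> 1" and X: "norm X < 1"
begin

lemma binom_series_inner_sums:
  "(\<lambda>k. binom_coeff v k * (bop_pow X k x \<bullet> y)) sums (binom_series v X x \<bullet> y)"
  using bounded_linear.sums[OF bounded_linear_compose[OF bounded_linear_inner_left blinfun.bounded_linear_left]
      binom_series_sums[OF v X]]
  by (simp add: blinfun.scaleR_left)

lemma selfadjoint_binom_series:
  assumes "selfadjoint X"
  shows "selfadjoint (binom_series v X)"
  unfolding selfadjoint_def
proof (intro allI)
  fix x y
  have "bop_pow X k x \<bullet> y = bop_pow X k y \<bullet> x" for k
    using selfadjoint_bop_pow[OF assms, of k] unfolding selfadjoint_def by (metis inner_commute)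
  then have "(\<lambda>k. binom_coeff v k * (bop_pow X k y \<bullet> x)) sums (binom_series v X x \<bullet> y)"
    using binom_series_inner_sums[of x y] by simp
  then have "binom_series v X x \<bullet> y = binom_series v X y \<bullet> x"
    using binom_series_inner_sums[of y x] by (rule sums_unique2)
  then show "binom_series v X x \<bullet> y = x \<bullet> binom_series v X y"
    by (metis inner_commute)
qed

lemma is_bop_binom_series:
  assumes "is_bop J X"
  shows "is_bop J (binom_series v X)"
  unfolding is_bop_iff
proof
  fix x
  have comm: "bop_pow X k (J x) = J (bop_pow X k x)" for k
    using is_bop_bop_pow[OF assms] by (simp add: is_bop_iff)
  note apply_sums = bounded_linear.sums[OF blinfun.bounded_linear_left binom_series_sums[OF v X]]
  have "(\<lambda>k. binom_coeff v k *\<^sub>R bop_pow X k (J x)) sums binom_series v X (J x)"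
    using apply_sums[of "J x"] unfolding blinfun.scaleR_left .
  moreover have "(\<lambda>k. binom_coeff v k *\<^sub>R bop_pow X k (J x)) sums J (binom_series v X x)"
    using bounded_linear.sums[OF blinfun.bounded_linear_right apply_sums[of x]]
    unfolding blinfun.scaleR_left blinfun.scaleR_right comm .
  ultimately show "binom_series v X (J x) = J (binom_series v X x)"
    by (rule sums_unique2)
qed

text \<open>The moments \<open>m k = X^k x \<bullet> x\<close> are log-convex, hence \<open>m k \<ge> \<rho>^k m 0\<close> with
  \<open>\<rho> = m 1 / m 0\<close>; as all binomial coefficients but the first are non-positive, the
  series is dominated by the scalar one evaluated at \<open>\<rho>\<close>.\<close>
lemma binom_series_inner_le:
  assumes "selfadjoint X" "positive_op X"
  shows "binom_series v X x \<bullet> x \<le> (x \<bullet> x) * (1 - (X x \<bullet> x) / (x \<bullet> x)) powr v"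
proof (cases "x = 0")
  case False
  define m where "m k = bop_pow X k x \<bullet> x" for k
  define \<rho> where "\<rho> = m 1 / m 0"
  have m0: "m 0 = x \<bullet> x" "m 0 > 0" using False by (simp_all add: m_def)
  have m1: "m 1 = X x \<bullet> x" by (simp add: m_def bop_pow_Suc)
  have "0 \<le> \<rho>" using m0 m1 assms(2) by (simp add: \<rho>_def positive_op_def)
  moreover have "\<rho> < 1"
  proof -
    have "m 1 \<le> norm X * m 0" unfolding m0 m1 by (rule inner_blinfun_le_norm)
    also have "\<dots> < m 0" using X m0 by simp
    finally show ?thesis using m0 by (simp add: \<rho>_def)
  qed
  ultimately have scalar: "(\<lambda>k. binom_coeff v k * \<rho> ^ k * m 0) sums ((1 - \<rho>) powr v * m 0)"
    using sums_mult2[OF binom_coeff_sums[of \<rho> v]] by simp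
  have geo: "\<rho> ^ k * m 0 \<le> m k" for k
    unfolding \<rho>_def
  proof (rule log_convex_seq_ge_geometric)
    show "0 \<le> m n" for n unfolding m_def by (rule inner_bop_pow_nonneg[OF assms])
    show "(m (Suc n))\<^sup>2 \<le> m n * m (Suc (Suc n))" for n
      unfolding m_def by (rule inner_bop_pow_log_convex[OF assms])
  qed (rule m0(2))
  have termwise: "binom_coeff v k * m k \<le> binom_coeff v k * \<rho> ^ k * m 0" for k
  proof (cases "k = 0")
    case False
    then have "1 \<le> k" by simp
    from mult_left_mono_neg[OF geo[of k] binom_coeff_nonpos[OF v this]]
    show ?thesis by (simp only: mult.assoc)
  qed simp
  have "(\<lambda>k. binom_coeff v k * m k) sums (binom_series v X x \<bullet> x)"
    unfolding m_def by (rule binom_series_inner_sums)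
  then have "binom_series v X x \<bullet> x \<le> (1 - \<rho>) powr v * m 0"
    using scalar by (rule sums_le[OF termwise])
  also have "\<dots> = (x \<bullet> x) * (1 - (X x \<bullet> x) / (x \<bullet> x)) powr v"
    unfolding \<rho>_def m0(1) m1 by (simp add: mult.commute)
  finally show ?thesis .
qed simp

end

lemma binom_series_half_square:
  fixes X :: "'a::{real_inner,complete_space} \<Rightarrow>\<^sub>L 'a"
  assumes "norm X < 1"
  shows "binom_series (1/2) X o\<^sub>L binom_series (1/2) X = id_blinfun - X"
proof -
  let ?a = "\<lambda>k. binom_coeff (1/2) k *\<^sub>R bop_pow X k"
  have sums: "?a sums binom_series (1/2) X"
    by (rule binom_series_sums) (use assms in simp_all)
  have norms: "summable (\<lambda>k. norm (?a k))"
  proof (rule summable_comparison_test'[OF binom_coeff_abs_summable[of "1/2" "norm X"]])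
    show "norm (norm (?a n)) \<le> \<bar>binom_coeff (1/2) n\<bar> * norm X ^ n" for n
      using norm_bop_pow_le[of X n] by (simp add: mult_left_mono)
  qed (use assms in simp_all)
  have "(\<lambda>k. \<Sum>i\<le>k. ?a i o\<^sub>L ?a (k - i)) sums (binom_series (1/2) X o\<^sub>L binom_series (1/2) X)"
    unfolding binom_series_def
    by (rule bounded_bilinear.Cauchy_product_sums[OF bounded_bilinear_blinfun_compose norms norms
          sums_summable[OF sums] sums_summable[OF sums]])
  moreover have "(\<Sum>i\<le>k. ?a i o\<^sub>L ?a (k - i)) = binom_coeff 1 k *\<^sub>R bop_pow X k" for k
  proof -
    have "?a i o\<^sub>L ?a (k - i) = (binom_coeff (1/2) i * binom_coeff (1/2) (k - i)) *\<^sub>R bop_pow X k"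
      if "i \<le> k" for i
    proof -
      have "bop_pow X i o\<^sub>L bop_pow X (k - i) = bop_pow X k"
        using that by (simp flip: bop_pow_add)
      then show ?thesis
        by (simp add: bounded_bilinear.scaleR_left[OF bounded_bilinear_blinfun_compose]
            bounded_bilinear.scaleR_right[OF bounded_bilinear_blinfun_compose])
    qed
    then show ?thesis
      by (simp add: binom_coeff_half_convolution flip: scaleR_sum_left)
  qed
  ultimately have "(\<lambda>k. binom_coeff 1 k *\<^sub>R bop_pow X k) sums (binom_series (1/2) X o\<^sub>L binom_series (1/2) X)"
    by simp
  moreover have "(\<lambda>k. binom_coeff 1 k *\<^sub>R bop_pow X k) sums (id_blinfun - X)"
  proof -
    have "(\<lambda>k. binom_coeff 1 k *\<^sub>R bop_pow X k) sums (\<Sum>k\<in>{0, 1}. binom_coeff 1 k *\<^sub>R bop_pow X k)"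
      by (rule sums_finite) (auto simp: binom_coeff_one)
    then show ?thesis by (simp add: binom_coeff_one bop_pow_Suc)
  qed
  ultimately show ?thesis by (rule sums_unique2)
qed

section \<open>Powers of coercive operators\<close>

definition opow_base :: "('a::real_normed_vector \<Rightarrow>\<^sub>L 'a) \<Rightarrow> ('a \<Rightarrow>\<^sub>L 'a)" where
  "opow_base C = id_blinfun - (1 / norm C) *\<^sub>R C"

lemma opow_eq_binom_series: "opow C v = norm C powr v *\<^sub>R binom_series v (opow_base C)"
  by (simp add: opow_def binom_series_def binom_coeff_def opow_base_def)

lemma inner_opow_base: "opow_base C x \<bullet> x = x \<bullet> x - (C x \<bullet> x) / norm C"
  by (simp add: opow_base_def blinfun.bilinear_simps inner_diff_left)

lemma selfadjoint_opow_base: "selfadjoint C \<Longrightarrow> selfadjoint (opow_base C)"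
  by (simp add: selfadjoint_def opow_base_def blinfun.bilinear_simps inner_diff_left inner_diff_right)

lemma positive_opow_base: "positive_op (opow_base C)"
  unfolding positive_op_def inner_opow_base
proof
  fix x
  show "0 \<le> x \<bullet> x - C x \<bullet> x / norm C"
    using inner_blinfun_le_norm[of C x] by (cases "norm C = 0") (simp_all add: divide_le_eq mult.commute)
qed

lemma is_bop_opow_base: "is_bop J C \<Longrightarrow> is_bop J (opow_base C)"
  by (simp add: is_bop_iff opow_base_def blinfun.bilinear_simps)

lemma norm_opow_base_less:
  assumes "selfadjoint C" "coercive C" "C \<noteq> 0"
  shows "norm (opow_base C) < 1"
proof -
  obtain m where m: "m > 0" "\<And>x. m * (x \<bullet> x) \<le> C x \<bullet> x"
    using assms(2) by (auto simp: coercive_def)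
  have c: "norm C > 0" using assms(3) by simp
  define r where "r = max 0 (1 - m / norm C)"
  have "norm (opow_base C) \<le> r"
  proof (rule norm_le_if_quadratic_form_le[OF selfadjoint_opow_base[OF assms(1)] positive_opow_base])
    fix x
    have "m * (x \<bullet> x) / norm C \<le> C x \<bullet> x / norm C" using m(2) c by (simp add: divide_right_mono)
    then have "opow_base C x \<bullet> x \<le> (1 - m / norm C) * (x \<bullet> x)"
      by (simp add: inner_opow_base algebra_simps)
    also have "\<dots> \<le> r * (x \<bullet> x)" by (simp add: r_def mult_right_mono)
    finally show "opow_base C x \<bullet> x \<le> r * (x \<bullet> x)" .
  qed (simp add: r_def)
  also have "r < 1" using m c by (simp add: r_def)
  finally show ?thesis .
qed

context
  fixes C :: "'a::{real_inner,complete_space} \<Rightarrow>\<^sub>L 'a"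
  assumes C: "selfadjoint C" "coercive C" "C \<noteq> 0"
begin

lemma selfadjoint_opow:
  assumes "0 \<le> v" "v \<le> 1"
  shows "selfadjoint (opow C v)"
  using selfadjoint_binom_series[OF assms norm_opow_base_less[OF C] selfadjoint_opow_base[OF C(1)]]
  by (simp add: opow_eq_binom_series selfadjoint_def blinfun.scaleR_left)

lemma is_bop_opow:
  assumes "0 \<le> v" "v \<le> 1" "is_bop J C"
  shows "is_bop J (opow C v)"
  using is_bop_binom_series[OF assms(1,2) norm_opow_base_less[OF C] is_bop_opow_base[OF assms(3)]]
  by (simp add: opow_eq_binom_series is_bop_iff blinfun.scaleR_left blinfun.scaleR_right)

lemma opow_half_square: "opow C (1/2) o\<^sub>L opow C (1/2) = C"
proof (rule blinfun_eqI)
  fix x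
  have c: "norm C > 0" using C(3) by simp
  have "(binom_series (1/2) (opow_base C) o\<^sub>L binom_series (1/2) (opow_base C)) x
      = (id_blinfun - opow_base C) x"
    by (simp only: binom_series_half_square[OF norm_opow_base_less[OF C]])
  then have "binom_series (1/2) (opow_base C) (binom_series (1/2) (opow_base C) x) = (1 / norm C) *\<^sub>R C x"
    by (simp add: opow_base_def blinfun.bilinear_simps)
  moreover have "norm C powr (1/2) * norm C powr (1/2) = norm C"
    using c by (simp flip: powr_add)
  ultimately show "(opow C (1/2) o\<^sub>L opow C (1/2)) x = C x"
    using c by (simp add: opow_eq_binom_series blinfun.scaleR_left blinfun.scaleR_right)
qed

lemma inner_opow_le:
  assumes v: "0 \<le> v" "v \<le> 1"
  shows "opow C v x \<bullet> x \<le> (1 - v) * (x \<bullet> x) + v * (C x \<bullet> x)"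
proof (cases "x = 0")
  case False
  let ?X = "opow_base C"
  define a where "a = C x \<bullet> x / (x \<bullet> x)"
  have xx: "x \<bullet> x > 0" using False by simp
  have c: "norm C > 0" using C(3) by simp
  have a: "a > 0"
  proof -
    obtain m where "m > 0" "m * (x \<bullet> x) \<le> C x \<bullet> x" using C(2) by (auto simp: coercive_def)
    with xx have "C x \<bullet> x > 0" by (smt (verit) mult_pos_pos)
    with xx show ?thesis by (simp add: a_def)
  qed
  have "opow C v x \<bullet> x = norm C powr v * (binom_series v ?X x \<bullet> x)"
    by (simp add: opow_eq_binom_series blinfun.scaleR_left)
  also have "\<dots> \<le> norm C powr v * ((x \<bullet> x) * (1 - (?X x \<bullet> x) / (x \<bullet> x)) powr v)"
    by (intro mult_left_mono binom_series_inner_le[OF v norm_opow_base_less[OF C]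
          selfadjoint_opow_base[OF C(1)] positive_opow_base]) simp
  also have "1 - (?X x \<bullet> x) / (x \<bullet> x) = a / norm C"
    using xx c by (simp add: inner_opow_base a_def field_simps)
  also have "norm C powr v * ((x \<bullet> x) * (a / norm C) powr v) = (x \<bullet> x) * (a powr v * 1 powr (1 - v))"
    using a c by (simp add: powr_divide)
  also have "\<dots> \<le> (x \<bullet> x) * (v * a + (1 - v) * 1)"
    using v a xx by (intro mult_left_mono Youngs_inequality_0) simp_all
  also have "\<dots> = (1 - v) * (x \<bullet> x) + v * (C x \<bullet> x)"
    using xx by (simp add: a_def field_simps)
  finally show ?thesis .
qed simp

end

section \<open>The weighted geometric mean\<close>

lemma selfadjoint_wmean_arith:
  "selfadjoint A \<Longrightarrow> selfadjoint B \<Longrightarrow> selfadjoint (wmean_arith v A B)"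
  by (simp add: selfadjoint_def wmean_arith_def blinfun.bilinear_simps inner_add_left inner_add_right)

lemma is_bop_wmean_arith: "is_bop J A \<Longrightarrow> is_bop J B \<Longrightarrow> is_bop J (wmean_arith v A B)"
  by (simp add: is_bop_iff wmean_arith_def blinfun.bilinear_simps)

locale coercive_pair =
  fixes A B :: "'a::{real_inner,complete_space} \<Rightarrow>\<^sub>L 'a"
  assumes A: "selfadjoint A" "coercive A" "bop_invertible A"
    and B: "selfadjoint B" "coercive B"
    and nontrivial: "\<exists>x::'a. x \<noteq> 0"
begin

definition "S = opow A (1/2)"

definition "C = bop_inverse S o\<^sub>L B o\<^sub>L bop_inverse S"

lemma A_nonzero: "A \<noteq> 0"
  using nontrivial coercive_nonzero[OF A(2)] by blast

lemma S_square: "S o\<^sub>L S = A"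
  unfolding S_def by (rule opow_half_square[OF A(1,2) A_nonzero])

lemma S_selfadjoint: "selfadjoint S"
  unfolding S_def by (rule selfadjoint_opow[OF A(1,2) A_nonzero]) simp_all

lemma S_invertible: "bop_invertible S"
  by (rule bop_invertible_if_square[OF S_square A(3)])

lemma C_selfadjoint: "selfadjoint C"
  unfolding C_def
  by (intro selfadjoint_sandwich selfadjoint_bop_inverse S_selfadjoint S_invertible B(1))

lemma C_coercive: "coercive C"
  unfolding C_def
  by (intro coercive_sandwich B(2) selfadjoint_bop_inverse bop_invertible_bop_inverse
      S_selfadjoint S_invertible)

lemma C_nonzero: "C \<noteq> 0"
  using nontrivial coercive_nonzero[OF C_coercive] by blast

lemma wmean_geom_eq: "wmean_geom v A B = S o\<^sub>L opow C v o\<^sub>L S"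
  by (simp add: wmean_geom_def S_def C_def Let_def)

lemma selfadjoint_wmean_geom: "0 \<le> v \<Longrightarrow> v \<le> 1 \<Longrightarrow> selfadjoint (wmean_geom v A B)"
  unfolding wmean_geom_eq
  by (intro selfadjoint_sandwich S_selfadjoint selfadjoint_opow[OF C_selfadjoint C_coercive C_nonzero])

lemma is_bop_wmean_geom:
  assumes "is_bop J A" "is_bop J B" "0 \<le> v" "v \<le> 1"
  shows "is_bop J (wmean_geom v A B)"
proof -
  have S: "is_bop J S"
    unfolding S_def by (rule is_bop_opow[OF A(1,2) A_nonzero _ _ assms(1)]) simp_all
  then have "is_bop J C"
    unfolding C_def by (intro is_bop_compose is_bop_bop_inverse S_invertible assms(2))
  then show ?thesis
    unfolding wmean_geom_eq
    by (intro is_bop_compose S is_bop_opow[OF C_selfadjoint C_coercive C_nonzero assms(3,4)])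
qed

lemma inner_wmean_geom_le:
  assumes "0 \<le> v" "v \<le> 1"
  shows "wmean_geom v A B x \<bullet> x \<le> wmean_arith v A B x \<bullet> x"
proof -
  let ?y = "S x"
  have "wmean_geom v A B x \<bullet> x = opow C v ?y \<bullet> ?y"
    using S_selfadjoint by (simp add: wmean_geom_eq selfadjoint_def)
  also have "\<dots> \<le> (1 - v) * (?y \<bullet> ?y) + v * (C ?y \<bullet> ?y)"
    by (rule inner_opow_le[OF C_selfadjoint C_coercive C_nonzero assms])
  also have "?y \<bullet> ?y = A x \<bullet> x"
    using S_selfadjoint S_square by (metis selfadjoint_def blinfun_apply_blinfun_compose)
  also have "C ?y \<bullet> ?y = B x \<bullet> x"
    using selfadjoint_bop_inverse[OF S_selfadjoint S_invertible]
    by (simp add: C_def selfadjoint_def bop_inverse_apply S_invertible)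
  finally show ?thesis
    by (simp add: wmean_arith_def blinfun.bilinear_simps inner_add_left)
qed

end

lemma loewner_le_wmean_geom_arith:
  assumes J: "complex_structure J" and AB: "pos_invertible J A" "pos_invertible J B"
    and v: "0 \<le> v" "v \<le> 1"
  shows "loewner_le J (wmean_geom v A B) (wmean_arith v A B)"
proof (cases "\<exists>x::'a. x \<noteq> 0")
  case True
  have hA: "selfadjoint A" "is_bop J A" and hB: "selfadjoint B" "is_bop J B"
    using AB by (simp_all add: pos_invertible_selfadjoint[OF J] pos_invertible_def)
  interpret coercive_pair A B
    using hA(1) hB(1) AB True
    by unfold_locales (simp_all add: pos_invertible_coercive[OF J] pos_invertible_def)
  show ?thesis
    unfolding loewner_le_iff_inner_le[OF J selfadjoint_wmean_geom[OF v] is_bop_wmean_geom[OF hA(2) hB(2) v]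
        selfadjoint_wmean_arith[OF hA(1) hB(1)] is_bop_wmean_arith[OF hA(2) hB(2)]]
    using inner_wmean_geom_le[OF v] by blast
qed (intro loewner_le_trivial, blast)

section \<open>Integrating the Heron means\<close>

lemma heron_diff_half:
  "heron t v A B - heron (1/2) v A B = (t - 1/2) *\<^sub>R (wmean_arith v A B - wmean_geom v A B)"
proof -
  have "(1/2::real) *\<^sub>R X + (1/2) *\<^sub>R X = X" for X :: "'a \<Rightarrow>\<^sub>L 'a"
    by (simp flip: scaleR_add_left)
  then show ?thesis by (simp add: heron_def algebra_simps)
qed

lemma integral_scaleR_blinfun:
  fixes f :: "'b::euclidean_space \<Rightarrow> real" and D :: "'a::real_inner \<Rightarrow>\<^sub>L 'a"
  shows "integral S (\<lambda>t. f t *\<^sub>R D) = integral S f *\<^sub>R D"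
proof (cases "f integrable_on S \<or> D = 0")
  case True
  then show ?thesis
    by (auto intro: integral_unique has_integral_scaleR_left integrable_integral)
next
  case False
  then obtain x where x: "D x \<noteq> 0" by (metis blinfun_eqI zero_blinfun.rep_eq)
  text \<open>Evaluating at \<open>x\<close> and pairing with \<open>D x\<close> recovers \<open>f\<close>, up to a non-zero factor.\<close>
  have "\<not> (\<lambda>t. f t *\<^sub>R D) integrable_on S"
  proof
    assume "(\<lambda>t. f t *\<^sub>R D) integrable_on S"
    then have "((\<lambda>T::'a \<Rightarrow>\<^sub>L 'a. T x \<bullet> D x) \<circ> (\<lambda>t. f t *\<^sub>R D)) integrable_on S"
      by (rule integrable_linear) (intro bounded_linear_compose[OF bounded_linear_inner_left]
          blinfun.bounded_linear_left)
    then have "(\<lambda>t. (D x \<bullet> D x) * f t) integrable_on S"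
      by (simp add: o_def blinfun.scaleR_left mult.commute)
    then show False using False x by simp
  qed
  then show ?thesis using False by (simp add: not_integrable_integral)
qed

lemma has_integral_quadratic_majorant:
  fixes a b :: real
  shows "((\<lambda>t. a * (t - 1/2) + b * t^2 / 2) has_integral b / 6) {0..1}"
proof -
  define F where "F t = a * (t^2/2 - t/2) + b * t^3 / 6" for t :: real
  have "((\<lambda>t. a * (t - 1/2) + b * t^2 / 2) has_integral (F 1 - F 0)) {0..1}"
  proof (rule fundamental_theorem_of_calculus)
    fix t :: real
    have "(F has_real_derivative (a * (t - 1/2) + b * t^2 / 2)) (at t within {0..1})"
      unfolding F_def by (rule derivative_eq_intros refl | simp)+
    then show "(F has_vector_derivative (a * (t - 1/2) + b * t^2 / 2)) (at t within {0..1})"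
      by (simp add: has_real_derivative_iff_has_vector_derivative)
  qed simp
  then show ?thesis by (simp add: F_def)
qed

text \<open>Below \<open>1/2\<close> the integrand is at most \<open>g 0 * (t - 1/2)\<close>, above it at most
  \<open>g 0 * (t - 1/2) + (g 1 - g 0) * (t - 1/2)\<close>, and \<open>t - 1/2 \<le> t^2/2\<close>.\<close>
lemma integral_mono_weight_le:
  fixes g :: "real \<Rightarrow> real"
  assumes mono: "mono_on {0..1} g"
  shows "integral {0..1} (\<lambda>t. g t * (t - 1/2)) \<le> (g 1 - g 0) / 6"
proof (cases "(\<lambda>t. g t * (t - 1/2)) integrable_on {0..1}")
  case True
  note majorant = has_integral_quadratic_majorant[of "g 0" "g 1 - g 0"]
  have "integral {0..1} (\<lambda>t. g t * (t - 1/2))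
      \<le> integral {0..1} (\<lambda>t. g 0 * (t - 1/2) + (g 1 - g 0) * t^2 / 2)"
  proof (rule integral_le[OF True])
    fix t :: real assume t: "t \<in> {0..1}"
    have g: "g 0 \<le> g t" "g t \<le> g 1" using t mono by (auto intro: mono_onD)
    have "(g t - g 0) * (t - 1/2) \<le> (g 1 - g 0) * t^2 / 2"
    proof (cases "t \<ge> 1/2")
      case True
      have "(g t - g 0) * (t - 1/2) \<le> (g 1 - g 0) * (t - 1/2)"
        using g True by (intro mult_right_mono) simp_all
      also have "\<dots> \<le> (g 1 - g 0) * (t^2 / 2)"
      proof (rule mult_left_mono)
        have "0 \<le> (t - 1)^2 / 2" by simp
        then show "t - 1/2 \<le> t^2 / 2" by (simp add: power2_eq_square field_simps)
      qed (use g in simp)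
      finally show ?thesis by simp
    next
      case False
      then have "(g t - g 0) * (t - 1/2) \<le> 0" using g by (intro mult_nonneg_nonpos) simp_all
      also have "0 \<le> (g 1 - g 0) * t^2 / 2" using g by simp
      finally show ?thesis .
    qed
    moreover have "g t * (t - 1/2) = (g t - g 0) * (t - 1/2) + g 0 * (t - 1/2)"
      by (simp add: left_diff_distrib)
    ultimately show "g t * (t - 1/2) \<le> g 0 * (t - 1/2) + (g 1 - g 0) * t^2 / 2"
      by linarith
  qed (use majorant in blast)
  also have "\<dots> = (g 1 - g 0) / 6" using majorant by (rule integral_unique)
  finally show ?thesis .
next
  case False
  have "g 0 \<le> g 1" using mono by (auto intro: mono_onD)
  with False show ?thesis by (simp add: not_integrable_integral)
qed

theorem theorem3p1:
  fixes J A B :: "'a::{real_inner,complete_space} \<Rightarrow>\<^sub>L 'a"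
    and v :: real and g :: "real \<Rightarrow> real"
  assumes "complex_structure J"
    and "pos_invertible J A" and "pos_invertible J B"
    and "0 \<le> v" and "v \<le> 1"
    and "mono_on {0..1} g" and "g 1 \<noteq> g 0"
  shows "loewner_le J
           (wmean_geom v A B + (4 / (g 1 - g 0)) *\<^sub>R
              integral {0..1} (\<lambda>t. g t *\<^sub>R (heron t v A B - heron (1/2) v A B)))
           (wmean_arith v A B)"
proof -
  let ?G = "wmean_geom v A B" and ?N = "wmean_arith v A B"
  define K where "K = 4 / (g 1 - g 0) * integral {0..1} (\<lambda>t. g t * (t - 1/2))"
  have "g 0 \<le> g 1" using assms(6) by (auto intro: mono_onD)
  with assms(7) have "0 < g 1 - g 0" by simp
  then have "K \<le> 1"
    using integral_mono_weight_le[OF assms(6)] by (simp add: K_def field_simps)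
  have "integral {0..1} (\<lambda>t. g t *\<^sub>R (heron t v A B - heron (1/2) v A B))
      = integral {0..1} (\<lambda>t. g t * (t - 1/2)) *\<^sub>R (?N - ?G)"
    by (simp add: heron_diff_half integral_scaleR_blinfun)
  then have "?G + (4 / (g 1 - g 0)) *\<^sub>R integral {0..1} (\<lambda>t. g t *\<^sub>R (heron t v A B - heron (1/2) v A B))
      = ?G + K *\<^sub>R (?N - ?G)"
    by (simp add: K_def)
  moreover have "loewner_le J ?G ?N"
    by (rule loewner_le_wmean_geom_arith[OF assms(1-5)])
  ultimately show ?thesis
    using \<open>K \<le> 1\<close> by (simp add: loewner_le_affine)
qed

end
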